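(* Let $\Gamma$ be as below, let $k>v_1$ be an integer, and let $\varphi=(x(t),y(t))$ be the $k$-jet of an element of $\Sigma_\Gamma$ (so $x(t)=t^{v_0}$ and $y(t)$ is a polynomial of degree $\le k$ starting with $t^{v_1}$). Define $$T_1=\{\,j^k\big(x'(t)\epsilon+\varphi^*(g),\ y'(t)\epsilon+\varphi^*(h)\big):\ \epsilon\in\mathcal M_1^2,\ g,h\in\mathcal M_2^2\,\},$$ $$\widetilde T=\{\,j^k\big(x'(t)\epsilon+\varphi^*(g),\ y'(t)\epsilon+\varphi^*(h)\big):\ \epsilon\in\mathcal M_1^2,\ g\in\langle X^2,Y\rangle,\ h\in\mathcal M_2^2\,\}$$ (these are the tangent spaces at $\varphi$ to the orbits of $\varphi$ under the groups of $k$-jets of $\mathcal A_1$, resp. $\widetilde{\mathcal A}$). Then for $b\in\mathbb C$, $b\ne0$: $(0,bt^k)\in T_1$ if and only if there exist $g,h\in\mathcal M_2^2$ with $\mathrm{ord}_t\big(\varphi^*(h)x'(t)-\varphi^*(g)y'(t)\big)=k+v_0-1$; and $(0,bt^k)\in\widetilde T$ if and only if there exist $g\in\langle X^2,Y\rangle$, $h\in\mathcal M_2^2$ with $\mathrm{ord}_t\big(\varphi^*(h)x'(t)-\varphi^*(g)y'(t)\big)=k+v_0-1$.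
   Context: $\mathcal O_1=\mathbb C\{t\}$, $\mathcal O_2=\mathbb C\{X,Y\}$, with maximal ideals $\mathcal M_1,\mathcal M_2$; $\varphi^*(h)=h(x(t),y(t))$; $j^k$ denotes the $k$-jet (truncation modulo $t^{k+1}$, componentwise); $\langle X^2,Y\rangle$ is the ideal of $\mathcal O_2$ generated by $X^2$ and $Y$. $\Gamma$ is the semigroup of values of a plane branch with minimal generators $v_0<v_1<\cdots<v_g$ and conductor $c$; $\Sigma_\Gamma$ is the set of Puiseux parametrizations $(t^{v_0},t^{v_1}+\sum_{v_1<i<c}a_it^i)$ (primitive, $v_0\nmid v_1$) whose semigroup of values $\{\mathrm{ord}_t h(x(t),y(t)): h\in\mathcal O_2,\ h(x,y)\ne0\}$ equals $\Gamma$. *)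

theory Defs
  imports "HOL-Computational_Algebra.Formal_Power_Series"
begin

definition conv1 :: "complex fps \<Rightarrow> bool" where
  "conv1 e \<longleftrightarrow> (\<exists>r>0. \<exists>M. \<forall>n. norm (fps_nth e n) * r ^ n \<le> M)"

text \<open>Elements of O_2 = C{X,Y}, represented by their coefficient functions
  (c i j is the coefficient of X^i Y^j), required to converge.\<close>
definition conv2 :: "(nat \<Rightarrow> nat \<Rightarrow> complex) \<Rightarrow> bool" where
  "conv2 c \<longleftrightarrow> (\<exists>r>0. \<exists>M. \<forall>i j. norm (c i j) * r ^ (i + j) \<le> M)"

definition M1sq :: "complex fps set" where
  "M1sq = {e. conv1 e \<and> fps_nth e 0 = 0 \<and> fps_nth e 1 = 0}"

definition M2sq :: "(nat \<Rightarrow> nat \<Rightarrow> complex) set" where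
  "M2sq = {c. conv2 c \<and> c 0 0 = 0 \<and> c 1 0 = 0 \<and> c 0 1 = 0}"

text \<open>The ideal generated by X^2 and Y in O_2: all X^2 a + Y b with a, b in O_2.\<close>
definition X2Y_ideal :: "(nat \<Rightarrow> nat \<Rightarrow> complex) set" where
  "X2Y_ideal = {c. \<exists>a b. conv2 a \<and> conv2 b \<and>
      c = (\<lambda>i j. (if 2 \<le> i then a (i - 2) j else 0) + (if 1 \<le> j then b i (j - 1) else 0))}"

text \<open>Pull-back phi^*(h) = h(x(t),y(t)), for x, y without constant term
  (then x^i y^j has order at least i+j, so the coefficient sum is finite).\<close>
definition pull :: "complex fps \<Rightarrow> complex fps \<Rightarrow> (nat \<Rightarrow> nat \<Rightarrow> complex) \<Rightarrow> complex fps" where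
  "pull x y c = Abs_fps (\<lambda>n. \<Sum>i\<le>n. \<Sum>j\<le>n. c i j * fps_nth (x ^ i * y ^ j) n)"

definition jet :: "nat \<Rightarrow> complex fps \<Rightarrow> complex fps" where
  "jet k f = Abs_fps (\<lambda>n. if n \<le> k then fps_nth f n else 0)"

definition value_semigroup :: "complex fps \<Rightarrow> complex fps \<Rightarrow> nat set" where
  "value_semigroup x y = {subdegree (pull x y h) | h. conv2 h \<and> pull x y h \<noteq> 0}"

definition mingens :: "nat set \<Rightarrow> nat set" where
  "mingens \<Gamma> = {v \<in> \<Gamma>. 0 < v \<and> \<not> (\<exists>a\<in>\<Gamma>. \<exists>b\<in>\<Gamma>. 0 < a \<and> 0 < b \<and> a + b = v)}"

definition gen0 :: "nat set \<Rightarrow> nat" where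
  "gen0 \<Gamma> = Min (mingens \<Gamma>)"

definition gen1 :: "nat set \<Rightarrow> nat" where
  "gen1 \<Gamma> = Min (mingens \<Gamma> - {gen0 \<Gamma>})"

definition conductor :: "nat set \<Rightarrow> nat" where
  "conductor \<Gamma> = (LEAST c. \<forall>n\<ge>c. n \<in> \<Gamma>)"

text \<open>Primitive parametrization: not of the form psi(t^m) with m > 1.\<close>
definition primitive :: "complex fps \<Rightarrow> complex fps \<Rightarrow> bool" where
  "primitive x y \<longleftrightarrow> \<not> (\<exists>m>1. \<forall>n. \<not> m dvd n \<longrightarrow> fps_nth x n = 0 \<and> fps_nth y n = 0)"

definition Sigma :: "nat set \<Rightarrow> (complex fps \<times> complex fps) set" where
  "Sigma \<Gamma> = {(x, y). \<exists>a :: nat \<Rightarrow> complex.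
      x = fps_X ^ gen0 \<Gamma> \<and>
      y = fps_X ^ gen1 \<Gamma> + (\<Sum>i\<in>{gen1 \<Gamma> <..< conductor \<Gamma>}. fps_const (a i) * fps_X ^ i) \<and>
      primitive x y \<and> \<not> gen0 \<Gamma> dvd gen1 \<Gamma> \<and> value_semigroup x y = \<Gamma>}"

definition T1 :: "nat \<Rightarrow> complex fps \<Rightarrow> complex fps \<Rightarrow> (complex fps \<times> complex fps) set" where
  "T1 k x y = {(jet k (fps_deriv x * e + pull x y g), jet k (fps_deriv y * e + pull x y h)) | e g h.
      e \<in> M1sq \<and> g \<in> M2sq \<and> h \<in> M2sq}"

definition Ttilde :: "nat \<Rightarrow> complex fps \<Rightarrow> complex fps \<Rightarrow> (complex fps \<times> complex fps) set" where
  "Ttilde k x y = {(jet k (fps_deriv x * e + pull x y g), jet k (fps_deriv y * e + pull x y h)) | e g h.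
      e \<in> M1sq \<and> g \<in> X2Y_ideal \<and> h \<in> M2sq}"

text \<open>ord_t f = k + v0 - 1 (f nonzero, so that its order is finite).\<close>
definition has_ord :: "complex fps \<Rightarrow> nat \<Rightarrow> bool" where
  "has_ord f m \<longleftrightarrow> f \<noteq> 0 \<and> subdegree f = m"

end

theory Submission
  imports Defs
begin

(* Write A = x' e + phi^*(g) and
   B = y' e + phi^*(h); then x' B - A y' = D.  If the k-jet of A vanishes, then A y'
   has no coefficients up to k + v0 - 1 (y' vanishes below v1 - 1 >= v0 - 1), so up
   to that degree D agrees with x' B = v0 t^(v0-1) B.  Hence (0, b t^k) is a tangent
   vector iff D has order exactly k + v0 - 1: one direction reads the coefficients of
   D off those of B; conversely, after rescaling g and h, the correction e is chosen
   to kill the k-jet of A (possible because phi^*(g) vanishes up to degree v0). *)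

lemma fps_mult_nth_eq_0_low:
  fixes f g :: "'a::comm_semiring_1 fps"
  assumes "\<forall>i<a. fps_nth f i = 0" and "\<forall>j<c. fps_nth g j = 0" and "m < a + c"
  shows "fps_nth (f * g) m = 0"
  unfolding fps_mult_nth
proof (rule sum.neutral, rule ballI)
  fix i assume "i \<in> {0..m}"
  then show "fps_nth f i * fps_nth g (m - i) = 0"
    using assms by (cases "i < a") auto
qed

lemma fps_power_nth_eq_0_low:
  fixes y :: "'a::comm_semiring_1 fps"
  assumes "\<forall>n<v. fps_nth y n = 0"
  shows "m < v * j \<Longrightarrow> fps_nth (y ^ j) m = 0"
proof (induction j arbitrary: m)
  case (Suc j)
  have IH: "\<forall>i<v * j. fps_nth (y ^ j) i = 0" using Suc.IH by blast
  show ?case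
    using fps_mult_nth_eq_0_low[OF assms IH] Suc.prems by simp
qed simp

lemma fps_deriv_X_power_mult_nth:
  fixes f :: "'a::comm_ring_1 fps"
  shows "fps_nth (fps_deriv (fps_X ^ v) * f) m =
           (if m < v - 1 then 0 else of_nat v * fps_nth f (m - (v - 1)))"
  by (simp add: fps_deriv_power mult.assoc fps_X_power_mult_nth)

lemma jet_nth: "fps_nth (jet k f) n = (if n \<le> k then fps_nth f n else 0)"
  by (simp add: jet_def)

lemma jet_eq_0_iff: "jet k f = 0 \<longleftrightarrow> (\<forall>n\<le>k. fps_nth f n = 0)"
  by (auto simp: fps_eq_iff jet_nth)

lemma jet_eq_monomial_iff:
  "jet k f = fps_const b * fps_X ^ k \<longleftrightarrow> (\<forall>n\<le>k. fps_nth f n = (if n = k then b else 0))"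
  by (auto simp: fps_eq_iff jet_nth)

lemma has_ord_iff: "has_ord f m \<longleftrightarrow> fps_nth f m \<noteq> 0 \<and> (\<forall>n<m. fps_nth f n = 0)"
  unfolding has_ord_def by (metis fps_nonzeroI nth_subdegree_nonzero subdegreeI subdegree_leI not_le)

lemma conv1_polynomial:
  assumes "\<forall>n>k. fps_nth e n = 0"
  shows "conv1 e"
proof -
  have "norm (fps_nth e n) * 1 ^ n \<le> (\<Sum>m\<le>k. norm (fps_nth e m))" for n
  proof (cases "n \<le> k")
    case True then show ?thesis by simp (rule member_le_sum, auto)
  next
    case False then show ?thesis using assms by (simp add: sum_nonneg)
  qed
  then show ?thesis unfolding conv1_def by (intro exI[of _ 1]) auto
qed

lemma conv2_scale:
  assumes "conv2 g"
  shows "conv2 (\<lambda>i j. c * g i j)"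
proof -
  obtain r M where "r > 0" and bound: "\<forall>i j. norm (g i j) * r ^ (i + j) \<le> M"
    using assms unfolding conv2_def by auto
  have "norm (c * g i j) * r ^ (i + j) \<le> norm c * M" for i j
    using mult_left_mono[OF bound[rule_format, of i j], of "norm c"]
    by (simp add: norm_mult mult.assoc)
  with \<open>r > 0\<close> show ?thesis unfolding conv2_def by auto
qed

lemma M2sq_scale: "g \<in> M2sq \<Longrightarrow> (\<lambda>i j. c * g i j) \<in> M2sq"
  unfolding M2sq_def using conv2_scale by auto

lemma X2Y_ideal_scale: "g \<in> X2Y_ideal \<Longrightarrow> (\<lambda>i j. c * g i j) \<in> X2Y_ideal"
proof -
  assume "g \<in> X2Y_ideal"
  then obtain a b where "conv2 a" "conv2 b" and
    g: "g = (\<lambda>i j. (if 2 \<le> i then a (i - 2) j else 0) + (if 1 \<le> j then b i (j - 1) else 0))"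
    unfolding X2Y_ideal_def by auto
  have "(\<lambda>i j. c * g i j) = (\<lambda>i j. (if 2 \<le> i then c * a (i - 2) j else 0)
                                   + (if 1 \<le> j then c * b i (j - 1) else 0))"
    unfolding g by (auto simp: fun_eq_iff distrib_left)
  then show ?thesis
    unfolding X2Y_ideal_def using conv2_scale[OF \<open>conv2 a\<close>] conv2_scale[OF \<open>conv2 b\<close>] by blast
qed

lemma pull_scale: "pull x y (\<lambda>i j. c * g i j) = fps_const c * pull x y g"
  by (rule fps_ext) (simp add: pull_def sum_distrib_left mult.assoc)

lemma pull_Y:
  assumes "fps_nth y 0 = 0"
  shows "pull x y (\<lambda>i j. if i = 0 \<and> j = 1 then 1 else 0) = y"
proof (rule fps_ext)
  fix n
  have "fps_nth (pull x y (\<lambda>i j. if i = 0 \<and> j = 1 then 1 else 0)) n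
          = (\<Sum>i\<le>n. \<Sum>j\<le>n. if i = 0 \<and> j = 1 then fps_nth y n else 0)"
    unfolding pull_def fps_nth_Abs_fps by (intro sum.cong refl) auto
  also have "\<dots> = (\<Sum>i\<le>n. if i = 0 then (\<Sum>j\<le>n. if j = 1 then fps_nth y n else 0) else 0)"
    by (rule sum.cong) auto
  also have "\<dots> = fps_nth y n"
    using assms by (cases n) (auto simp: sum.delta)
  finally show "fps_nth (pull x y (\<lambda>i j. if i = 0 \<and> j = 1 then 1 else 0)) n = fps_nth y n" .
qed

lemma mingens_single_dvd:
  assumes "mingens G \<subseteq> {v}"
  shows "n \<in> G \<Longrightarrow> v dvd n"
proof (induction n rule: less_induct)
  case (less n)
  show ?case
  proof (cases "n = 0 \<or> n \<in> mingens G")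
    case True then show ?thesis using assms by auto
  next
    case False
    then obtain a b where "a \<in> G" "b \<in> G" "0 < a" "0 < b" "a + b = n"
      using less.prems unfolding mingens_def by auto
    with less.IH[of a] less.IH[of b] show ?thesis by auto
  qed
qed

(* Min of an infinite or empty set is one fixed unspecified value; so if the generator
   sets were degenerate, gen0 and gen1 would coincide. *)
lemma Min_not_finite_nonempty: "\<not> (finite (A::nat set) \<and> A \<noteq> {}) \<Longrightarrow> Min A = the None"
  using Min.infinite[of A] by (auto simp add: Min.eq_fold')

(* Unpacking Sigma_Gamma: x0 = t^v0, y0 has order exactly v1, v0 does not divide v1,
   and v1 = ord y0 = ord phi^*(Y) is a value of the branch, i.e. lies in Gamma. *)
lemma Sigma_shape:
  assumes "(x0, y0) \<in> Sigma \<Gamma>"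
  shows "x0 = fps_X ^ gen0 \<Gamma>" and "\<forall>n<gen1 \<Gamma>. fps_nth y0 n = 0"
    and "\<not> gen0 \<Gamma> dvd gen1 \<Gamma>" and "gen1 \<Gamma> \<in> \<Gamma>"
proof -
  obtain a where x0: "x0 = fps_X ^ gen0 \<Gamma>"
    and y0: "y0 = fps_X ^ gen1 \<Gamma> + (\<Sum>i\<in>{gen1 \<Gamma> <..< conductor \<Gamma>}. fps_const (a i) * fps_X ^ i)"
    and ndvd: "\<not> gen0 \<Gamma> dvd gen1 \<Gamma>" and semigroup: "value_semigroup x0 y0 = \<Gamma>"
    using assms unfolding Sigma_def by auto
  have y0_nth: "fps_nth y0 n = (if n = gen1 \<Gamma> then 1 else 0)" if "n \<le> gen1 \<Gamma>" for n
    using that unfolding y0 by (simp add: fps_sum_nth)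
  have y0_low: "\<forall>n<gen1 \<Gamma>. fps_nth y0 n = 0" using y0_nth by simp
  have "gen1 \<Gamma> \<noteq> 0" using ndvd by (metis dvd_0_right)
  have "conv2 (\<lambda>i j. if i = 0 \<and> j = 1 then 1 else 0 :: complex)"
    unfolding conv2_def by (rule exI[of _ 1]) (auto intro!: exI[of _ 1])
  moreover have "pull x0 y0 (\<lambda>i j. if i = 0 \<and> j = 1 then 1 else 0) = y0"
    using pull_Y y0_low \<open>gen1 \<Gamma> \<noteq> 0\<close> by blast
  moreover have "y0 \<noteq> 0" "subdegree y0 = gen1 \<Gamma>"
    using y0_nth[of "gen1 \<Gamma>"] y0_low by (auto intro: subdegreeI)
  ultimately show "gen1 \<Gamma> \<in> \<Gamma>" using semigroup unfolding value_semigroup_def by force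
  show "x0 = fps_X ^ gen0 \<Gamma>" "\<forall>n<gen1 \<Gamma>. fps_nth y0 n = 0" "\<not> gen0 \<Gamma> dvd gen1 \<Gamma>"
    using x0 y0_low ndvd by auto
qed

(* For a parametrization in Sigma_Gamma the generators satisfy 0 < v0 < v1: since
   v1 is in Gamma but not a multiple of v0, there is a second minimal generator. *)
lemma Sigma_generators:
  assumes "(x0, y0) \<in> Sigma \<Gamma>"
  shows "0 < gen0 \<Gamma> \<and> gen0 \<Gamma> < gen1 \<Gamma>"
proof -
  define M where "M = mingens \<Gamma>"
  note ndvd = Sigma_shape(3)[OF assms] and gen1_in = Sigma_shape(4)[OF assms]
  have M_fin: "finite M \<and> M \<noteq> {}"
  proof (rule ccontr)
    assume "\<not> (finite M \<and> M \<noteq> {})"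
    then have "gen1 \<Gamma> = gen0 \<Gamma>"
      using Min_not_finite_nonempty[of M] Min_not_finite_nonempty[of "M - {gen0 \<Gamma>}"]
      unfolding gen0_def gen1_def M_def by auto
    with ndvd show False by auto
  qed
  then have gen0_in: "gen0 \<Gamma> \<in> M" unfolding gen0_def M_def by auto
  have "M - {gen0 \<Gamma>} \<noteq> {}"
    using mingens_single_dvd[of \<Gamma> "gen0 \<Gamma>"] gen1_in ndvd unfolding M_def by blast
  then have "gen1 \<Gamma> \<in> M - {gen0 \<Gamma>}"
    using M_fin unfolding gen1_def M_def by (metis Min_in finite_Diff)
  moreover have "gen0 \<Gamma> \<le> gen1 \<Gamma>" using M_fin calculation unfolding gen0_def M_def by auto
  moreover have "0 < gen0 \<Gamma>" using gen0_in unfolding M_def mingens_def by auto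
  ultimately show ?thesis by auto
qed

definition tangent_space ::
  "nat \<Rightarrow> complex fps \<Rightarrow> complex fps \<Rightarrow> (nat \<Rightarrow> nat \<Rightarrow> complex) set \<Rightarrow> (complex fps \<times> complex fps) set"
where
  "tangent_space k x y G = {(jet k (fps_deriv x * e + pull x y g), jet k (fps_deriv y * e + pull x y h)) | e g h.
      e \<in> M1sq \<and> g \<in> G \<and> h \<in> M2sq}"

locale puiseux_param =
  fixes v0 v1 :: nat and x y :: "complex fps"
  assumes x_eq: "x = fps_X ^ v0"
    and v0_pos: "0 < v0"
    and v0_less_v1: "v0 < v1"
    and y_low: "\<forall>n<v1. fps_nth y n = 0"
begin

lemma deriv_x_mult_nth:
  "fps_nth (fps_deriv x * f) m = (if m < v0 - 1 then 0 else of_nat v0 * fps_nth f (m - (v0 - 1)))"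
  unfolding x_eq by (rule fps_deriv_X_power_mult_nth)

lemma pull_nth_eq_0_low:
  assumes "g 0 0 = 0" and "g 1 0 = 0" and "n \<le> v0"
  shows "fps_nth (pull x y g) n = 0"
proof -
  have term_0: "g i j * fps_nth (x ^ i * y ^ j) n = 0" for i j
  proof (cases "j = 0")
    case True
    then show ?thesis
    proof (cases "i \<le> 1")
      case True with \<open>j = 0\<close> assms show ?thesis by (cases i) auto
    next
      case False
      then have "n < v0 * i" using assms(3) v0_pos
        by (metis le_trans less_le_trans mult.comm_neutral mult_le_cancel1 not_le less_one)
      then show ?thesis by (simp add: x_eq power_mult[symmetric] fps_X_power_mult_nth)
    qed
  next
    case False
    then have "n - v0 * i < v1 * j" using assms(3) v0_less_v1
      by (metis diff_le_self le_less_trans less_le_trans mult_le_mono2 nat_mult_1_right not_le less_one)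
    then show ?thesis using fps_power_nth_eq_0_low[OF y_low]
      by (simp add: x_eq power_mult[symmetric] fps_X_power_mult_nth)
  qed
  then show ?thesis unfolding pull_def fps_nth_Abs_fps term_0 by simp
qed

lemma obstruction_nth:
  assumes "jet k A = 0" and "m \<le> k + v0 - 1"
  shows "fps_nth (fps_deriv x * B - A * fps_deriv y) m = fps_nth (fps_deriv x * B) m"
proof -
  have "\<forall>i<Suc k. fps_nth A i = 0" using assms(1) by (simp add: jet_eq_0_iff)
  moreover have "\<forall>j<v1 - 1. fps_nth (fps_deriv y) j = 0" using y_low by simp
  moreover have "m < Suc k + (v1 - 1)" using assms(2) v0_less_v1 by simp
  ultimately have "fps_nth (A * fps_deriv y) m = 0" by (rule fps_mult_nth_eq_0_low)
  then show ?thesis by simp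
qed

lemma correction_exists:
  assumes p_low: "\<forall>n\<le>v0. fps_nth p n = 0"
  shows "\<exists>e\<in>M1sq. jet k (fps_deriv x * e + p) = 0"
proof
  define e where "e = Abs_fps (\<lambda>n. if n \<le> k then - fps_nth p (n + v0 - 1) / of_nat v0 else 0)"
  have e_nth: "fps_nth e n = (if n \<le> k then - fps_nth p (n + v0 - 1) / of_nat v0 else 0)" for n
    unfolding e_def by simp
  have "conv1 e" by (rule conv1_polynomial[of k]) (simp add: e_nth)
  moreover have "fps_nth e 0 = 0" "fps_nth e 1 = 0"
    using e_nth[of 0] e_nth[of 1] p_low v0_pos by auto
  ultimately show "e \<in> M1sq" unfolding M1sq_def by simp
  have "fps_nth (fps_deriv x * e + p) n = 0" if "n \<le> k" for n
  proof (cases "n < v0 - 1")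
    case True then show ?thesis using p_low by (simp add: deriv_x_mult_nth)
  next
    case False
    then have "n - (v0 - 1) \<le> k" "n - (v0 - 1) + v0 - 1 = n" using that v0_pos by auto
    then show ?thesis using False e_nth[of "n - (v0 - 1)"] v0_pos by (simp add: deriv_x_mult_nth)
  qed
  then show "jet k (fps_deriv x * e + p) = 0" by (simp add: jet_eq_0_iff)
qed

(* Necessity: the coefficients of D up to k + v0 - 1 are v0 times those of B. *)
lemma tangent_imp_order:
  assumes "(0, fps_const b * fps_X ^ k) \<in> tangent_space k x y G" and "b \<noteq> 0"
  shows "\<exists>g\<in>G. \<exists>h\<in>M2sq.
           has_ord (pull x y h * fps_deriv x - pull x y g * fps_deriv y) (k + v0 - 1)"
proof -
  obtain e g h where "g \<in> G" "h \<in> M2sq"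
    and A_jet: "jet k (fps_deriv x * e + pull x y g) = 0"
    and B_jet: "jet k (fps_deriv y * e + pull x y h) = fps_const b * fps_X ^ k"
    using assms(1) unfolding tangent_space_def by auto
  define A where "A = fps_deriv x * e + pull x y g"
  define B where "B = fps_deriv y * e + pull x y h"
  define D where "D = pull x y h * fps_deriv x - pull x y g * fps_deriv y"
  have D_eq: "D = fps_deriv x * B - A * fps_deriv y"
    unfolding D_def A_def B_def by (simp add: algebra_simps)
  have B_nth: "fps_nth B n = (if n = k then b else 0)" if "n \<le> k" for n
    using B_jet that unfolding B_def jet_eq_monomial_iff by blast
  have D_nth: "fps_nth D m = (if m = k + v0 - 1 then of_nat v0 * b else 0)"
    if "m \<le> k + v0 - 1" for m
  proof -
    have "fps_nth D m = fps_nth (fps_deriv x * B) m"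
      unfolding D_eq using obstruction_nth[OF A_jet[folded A_def] that] .
    also have "\<dots> = (if m = k + v0 - 1 then of_nat v0 * b else 0)"
      using B_nth[of "m - (v0 - 1)"] that v0_pos by (auto simp: deriv_x_mult_nth)
    finally show ?thesis .
  qed
  have "has_ord D (k + v0 - 1)"
    unfolding has_ord_iff using D_nth assms(2) v0_pos by simp
  with \<open>g \<in> G\<close> \<open>h \<in> M2sq\<close> show ?thesis unfolding D_def by blast
qed

(* Sufficiency: rescale so that D starts with v0 * b t^(k+v0-1), then correct by e. *)
lemma order_imp_tangent:
  assumes G_scale: "\<And>g c. g \<in> G \<Longrightarrow> (\<lambda>i j. c * g i j) \<in> G"
    and G_low: "\<And>g. g \<in> G \<Longrightarrow> g 0 0 = 0 \<and> g 1 0 = 0"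
    and "g \<in> G" and "h \<in> M2sq"
    and ord: "has_ord (pull x y h * fps_deriv x - pull x y g * fps_deriv y) (k + v0 - 1)"
  shows "(0, fps_const b * fps_X ^ k) \<in> tangent_space k x y G"
proof -
  define D where "D = pull x y h * fps_deriv x - pull x y g * fps_deriv y"
  define c where "c = fps_nth D (k + v0 - 1)"
  have "c \<noteq> 0" and D_low: "\<forall>n<k + v0 - 1. fps_nth D n = 0"
    using ord unfolding has_ord_iff c_def D_def by auto
  txt \<open>Rescale g and h so that the leading coefficient of D becomes v0 * b.\<close>
  define l where "l = of_nat v0 * b / c"
  define g' where "g' = (\<lambda>i j. l * g i j)"
  define h' where "h' = (\<lambda>i j. l * h i j)"
  have "g' \<in> G" "h' \<in> M2sq" unfolding g'_def h'_def using assms(3,4) G_scale M2sq_scale by auto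
  have "\<forall>n\<le>v0. fps_nth (pull x y g') n = 0" using G_low[OF \<open>g' \<in> G\<close>] pull_nth_eq_0_low by auto
  then obtain e where "e \<in> M1sq" and A_jet: "jet k (fps_deriv x * e + pull x y g') = 0"
    using correction_exists by blast
  define A where "A = fps_deriv x * e + pull x y g'"
  define B where "B = fps_deriv y * e + pull x y h'"
  have key: "fps_deriv x * B - A * fps_deriv y = fps_const l * D"
    unfolding A_def B_def D_def g'_def h'_def pull_scale by (simp add: algebra_simps)
  have "fps_nth B n = (if n = k then b else 0)" if "n \<le> k" for n
  proof -
    have m: "n + v0 - 1 \<le> k + v0 - 1" "\<not> n + v0 - 1 < v0 - 1" "n + v0 - 1 - (v0 - 1) = n"
      using that v0_pos by auto
    have "of_nat v0 * fps_nth B n = fps_nth (fps_deriv x * B) (n + v0 - 1)"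
      using m by (simp add: deriv_x_mult_nth)
    also have "\<dots> = l * fps_nth D (n + v0 - 1)"
      using obstruction_nth[OF A_jet[folded A_def] m(1), of B] key by simp
    also have "\<dots> = of_nat v0 * (if n = k then b else 0)"
      using D_low that v0_pos \<open>c \<noteq> 0\<close> unfolding l_def c_def by auto
    finally show ?thesis using v0_pos by simp
  qed
  then have "jet k B = fps_const b * fps_X ^ k" by (simp add: jet_eq_monomial_iff)
  then have "(0, fps_const b * fps_X ^ k)
               = (jet k (fps_deriv x * e + pull x y g'), jet k (fps_deriv y * e + pull x y h'))"
    using A_jet unfolding B_def by simp
  then show ?thesis
    using \<open>e \<in> M1sq\<close> \<open>g' \<in> G\<close> \<open>h' \<in> M2sq\<close> unfolding tangent_space_def by blast
qed

theorem tangent_iff_order: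
  assumes "\<And>g c. g \<in> G \<Longrightarrow> (\<lambda>i j. c * g i j) \<in> G"
    and "\<And>g. g \<in> G \<Longrightarrow> g 0 0 = 0 \<and> g 1 0 = 0"
    and "b \<noteq> 0"
  shows "(0, fps_const b * fps_X ^ k) \<in> tangent_space k x y G \<longleftrightarrow>
           (\<exists>g\<in>G. \<exists>h\<in>M2sq.
              has_ord (pull x y h * fps_deriv x - pull x y g * fps_deriv y) (k + v0 - 1))"
proof
  assume "(0, fps_const b * fps_X ^ k) \<in> tangent_space k x y G"
  then show "\<exists>g\<in>G. \<exists>h\<in>M2sq.
               has_ord (pull x y h * fps_deriv x - pull x y g * fps_deriv y) (k + v0 - 1)"
    using assms(3) by (rule tangent_imp_order)
next
  assume "\<exists>g\<in>G. \<exists>h\<in>M2sq.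
            has_ord (pull x y h * fps_deriv x - pull x y g * fps_deriv y) (k + v0 - 1)"
  then obtain g h where "g \<in> G" "h \<in> M2sq"
    and "has_ord (pull x y h * fps_deriv x - pull x y g * fps_deriv y) (k + v0 - 1)" by blast
  with assms(1,2) show "(0, fps_const b * fps_X ^ k) \<in> tangent_space k x y G"
    by (rule order_imp_tangent)
qed

end

theorem lemma3p1:
  fixes \<Gamma> :: "nat set" and k :: nat and x0 y0 x y :: "complex fps" and b :: complex
  assumes "(x0, y0) \<in> Sigma \<Gamma>"
    and "k > gen1 \<Gamma>"
    and "x = jet k x0" and "y = jet k y0"
    and "b \<noteq> 0"
  shows "((0, fps_const b * fps_X ^ k) \<in> T1 k x y \<longleftrightarrow>
           (\<exists>g\<in>M2sq. \<exists>h\<in>M2sq.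
              has_ord (pull x y h * fps_deriv x - pull x y g * fps_deriv y) (k + gen0 \<Gamma> - 1)))
       \<and> ((0, fps_const b * fps_X ^ k) \<in> Ttilde k x y \<longleftrightarrow>
           (\<exists>g\<in>X2Y_ideal. \<exists>h\<in>M2sq.
              has_ord (pull x y h * fps_deriv x - pull x y g * fps_deriv y) (k + gen0 \<Gamma> - 1)))"
proof -
  have gens: "0 < gen0 \<Gamma>" "gen0 \<Gamma> < gen1 \<Gamma>" "x0 = fps_X ^ gen0 \<Gamma>" "\<forall>n<gen1 \<Gamma>. fps_nth y0 n = 0"
    using Sigma_generators[OF assms(1)] Sigma_shape(1,2)[OF assms(1)] by auto
  have "x = fps_X ^ gen0 \<Gamma>"
    using gens assms(2) by (auto simp: assms(3) fps_eq_iff jet_nth)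
  moreover have "\<forall>n<gen1 \<Gamma>. fps_nth y n = 0" using gens by (simp add: assms(4) jet_nth)
  ultimately interpret puiseux_param "gen0 \<Gamma>" "gen1 \<Gamma>" x y
    using gens by unfold_locales auto
  have "T1 k x y = tangent_space k x y M2sq" "Ttilde k x y = tangent_space k x y X2Y_ideal"
    unfolding T1_def Ttilde_def tangent_space_def by simp_all
  moreover have "(0, fps_const b * fps_X ^ k) \<in> tangent_space k x y M2sq \<longleftrightarrow>
      (\<exists>g\<in>M2sq. \<exists>h\<in>M2sq. has_ord (pull x y h * fps_deriv x - pull x y g * fps_deriv y) (k + gen0 \<Gamma> - 1))"
    by (rule tangent_iff_order[OF M2sq_scale]) (auto simp: M2sq_def assms(5))
  moreover have "(0, fps_const b * fps_X ^ k) \<in> tangent_space k x y X2Y_ideal \<longleftrightarrow>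
      (\<exists>g\<in>X2Y_ideal. \<exists>h\<in>M2sq. has_ord (pull x y h * fps_deriv x - pull x y g * fps_deriv y) (k + gen0 \<Gamma> - 1))"
    by (rule tangent_iff_order[OF X2Y_ideal_scale]) (auto simp: X2Y_ideal_def assms(5))
  ultimately show ?thesis by simp
qed

end
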